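(* For every $a\in\{1,\dots,n\}$, the following identities hold in $\mathrm{Cl}_q(n,k)$: \[ \psi_a \omega_a^{2k} = q^{-2k}\psi_a,\qquad \psi_a^*\omega_a^{2k}=\psi_a^*,\qquad \omega_a^{-k} = (q^{2k}+1)\omega_a^k - q^{2k}\omega_a^{3k}. \]
   Context: Let $\mathbb{k}$ be a field of characteristic different from $2$, let $q\in\mathbb{k}^\times$, and let $n,k$ be positive integers. The quantum Clifford algebra $\mathrm{Cl}_q(n,k)$ is the unital associative $\mathbb{k}$-algebra generated by $\psi_a,\psi_a^*,\omega_a,\omega_a^{-1}$ for $a\in\{1,\dots,n\}$, subject to the relations (for all $a,b\in\{1,\dots,n\}$): $\omega_a\omega_b=\omega_b\omega_a$; $\omega_a\omega_a^{-1}=1$; $\omega_a\psi_b=q^{\delta_{ab}}\psi_b\omega_a$; $\omega_a\psi_b^*=q^{-\delta_{ab}}\psi_b^*\omega_a$; $\psi_a\psi_b+\psi_b\psi_a=0$; $\psi_a^*\psi_b^*+\psi_b^*\psi_a^*=0$; $\psi_a\psi_a^*+q^k\psi_a^*\psi_a=\omega_a^{-k}$; $\psi_a\psi_a^*+q^{-k}\psi_a^*\psi_a=\omega_a^{k}$; and $\psi_a\psi_b^*+\psi_b^*\psi_a=0$ if $a\neq b$. *)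

theory Defs
  imports Main
begin

text \<open>A unital associative algebra over a field 'f is modelled as a ring 'a together
with a unital ring homomorphism from 'f into the centre of 'a.\<close>

definition central_hom :: "('f::field \<Rightarrow> 'a::ring_1) \<Rightarrow> bool" where
  "central_hom e \<longleftrightarrow> e 0 = 0 \<and> e 1 = 1 \<and>
     (\<forall>x y. e (x + y) = e x + e y) \<and> (\<forall>x y. e (x * y) = e x * e y) \<and>
     (\<forall>x z. e x * z = z * e x)"

text \<open>The defining relations of the quantum Clifford algebra Cl_q(n,k), for elements
psi a, psis a (= psi_a^*), om a (= omega_a), omi a (= omega_a^{-1}), a in {1..n}.\<close>

definition clq_rels ::
  "('f::field \<Rightarrow> 'a::ring_1) \<Rightarrow> 'f \<Rightarrow> nat \<Rightarrow> nat \<Rightarrow>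
   (nat \<Rightarrow> 'a) \<Rightarrow> (nat \<Rightarrow> 'a) \<Rightarrow> (nat \<Rightarrow> 'a) \<Rightarrow> (nat \<Rightarrow> 'a) \<Rightarrow> bool" where
  "clq_rels e q n k psi psis om omi \<longleftrightarrow>
     (\<forall>a\<in>{1..n}. \<forall>b\<in>{1..n}.
        om a * om b = om b * om a \<and>
        om a * omi a = 1 \<and>
        om a * psi b = e (if a = b then q else 1) * psi b * om a \<and>
        om a * psis b = e (if a = b then inverse q else 1) * psis b * om a \<and>
        psi a * psi b + psi b * psi a = 0 \<and>
        psis a * psis b + psis b * psis a = 0 \<and>
        psi a * psis a + e (q ^ k) * psis a * psi a = omi a ^ k \<and>
        psi a * psis a + e (inverse q ^ k) * psis a * psi a = om a ^ k \<and>
        (a \<noteq> b \<longrightarrow> psi a * psis b + psis b * psi a = 0))"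

end

theory Submission
  imports Defs
begin

text \<open>Write P = psi_a, S = psi_a^*, W = omega_a^k, A = P S and B = S P.
  Since 2 is invertible, P^2 = S^2 = 0, so A and B annihilate each other, and the two
  mixed relations say W = A + q^(-k) B and W^(-1) = A + q^k B. Multiplying them gives
  A^2 + B^2 = 1, hence A^3 = A, B^3 = B and W^3 = A + q^(-3k) B; so W^(-1) is a linear
  combination of W and W^3. Moreover P W = q^(-k) P S P = q^(-2k) P W^(-1) and
  S W = S P S = S W^(-1).\<close>

lemma central_hom_one: "central_hom e \<Longrightarrow> e 1 = 1"
  and central_hom_add: "central_hom e \<Longrightarrow> e (x + y) = e x + e y"
  and central_hom_mult: "central_hom e \<Longrightarrow> e (x * y) = e x * e y"
  and central_hom_commute: "central_hom e \<Longrightarrow> e x * z = z * e x"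
  unfolding central_hom_def by blast+

lemma central_hom_power: "central_hom e \<Longrightarrow> e (x ^ n) = e x ^ n"
  by (induction n) (simp_all add: central_hom_one central_hom_mult)

lemma central_hom_inverse: "central_hom e \<Longrightarrow> x \<noteq> 0 \<Longrightarrow> e (inverse x) * e x = 1"
  by (simp add: central_hom_mult [symmetric] central_hom_one)

lemma central_hom_double_zero:
  fixes e :: "'f::field \<Rightarrow> 'a::ring_1" and z :: 'a
  assumes e: "central_hom e" and two: "(2::'f) \<noteq> 0" and "z + z = 0"
  shows "z = 0"
proof -
  have "e 2 = 2"
    using central_hom_add [OF e, of 1 1] by (simp add: central_hom_one [OF e])
  then have "z = e (inverse 2) * 2 * z"
    using central_hom_inverse [OF e two] by simp
  also have "\<dots> = e (inverse 2) * (z + z)"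
    by (simp add: mult.assoc mult_2)
  finally show ?thesis
    using \<open>z + z = 0\<close> by simp
qed

lemma central_left_commute:
  fixes c x y :: "'a::semigroup_mult"
  assumes "\<And>z. c * z = z * c"
  shows "x * (c * y) = c * (x * y)"
proof -
  have "x * (c * y) = x * c * y"
    by (rule mult.assoc [symmetric])
  also have "\<dots> = c * x * y"
    using assms [of x] by simp
  finally show ?thesis
    by (simp add: mult.assoc)
qed

lemma orthogonal_sum_mult:
  fixes A B c d :: "'a::ring_1"
  assumes "A * B = 0" "B * A = 0" "\<And>z. d * z = z * d"
  shows "(A + c * B) * (A + d * B) = A * A + c * d * (B * B)"
proof -
  note d_left_commute = central_left_commute [of d, OF assms(3)]
  have "A * (d * B) = 0" "c * B * A = 0" "c * B * (d * B) = c * d * (B * B)"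
    using assms(1,2) by (simp_all add: d_left_commute mult.assoc)
  then show ?thesis
    by (simp add: distrib_left distrib_right)
qed

lemma orthogonal_square_sum_cube:
  fixes A B :: "'a::ring_1"
  assumes "A ^ 2 + B ^ 2 = 1" and "B * A = 0"
  shows "A ^ 3 = A"
proof -
  have "A ^ 3 = (A ^ 2 + B ^ 2) * A - B * (B * A)"
    by (simp add: algebra_simps power2_eq_square power3_eq_cube)
  with assms show ?thesis
    by simp
qed

lemma orthogonal_sum_power:
  fixes A B c :: "'a::ring_1"
  assumes AB: "A * B = 0" and BA: "B * A = 0" and c: "\<And>z. c * z = z * c"
  shows "(A + c * B) ^ Suc n = A ^ Suc n + c ^ Suc n * B ^ Suc n"
proof (induction n)
  case (Suc n)
  define m where "m = Suc n"
  have "A ^ m * B = 0" "B ^ m * A = 0"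
    unfolding m_def by (simp_all add: power_Suc2 mult.assoc AB BA del: power_Suc)
  have "(A + c * B) ^ Suc m = (A ^ m + c ^ m * B ^ m) * (A + c * B)"
    by (simp only: power_Suc2 [of "A + c * B" m] Suc.IH [folded m_def])
  also have "\<dots> = A ^ m * A + c ^ m * B ^ m * A + (A ^ m * (c * B) + c ^ m * B ^ m * (c * B))"
    by (simp only: distrib_left distrib_right)
  also have "\<dots> = A ^ Suc m + c ^ Suc m * B ^ Suc m"
    using \<open>A ^ m * B = 0\<close> \<open>B ^ m * A = 0\<close>
    by (simp add: central_left_commute [OF c] mult.assoc power_Suc2 del: power_Suc)
  finally show ?case
    unfolding m_def .
qed simp

text \<open>One index a of Cl_q(n,k): P, S, r, s, W, V stand for psi_a, psi_a^*, q^(-k), q^k,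
  omega_a^k and omega_a^(-k).\<close>

locale clifford_mode =
  fixes P S r s W V :: "'a::ring_1"
  assumes P_square: "P * P = 0" and S_square: "S * S = 0"
    and r_central: "\<And>z. r * z = z * r" and s_central: "\<And>z. s * z = z * s"
    and r_s: "r * s = 1"
    and W_eq: "W = P * S + r * (S * P)" and V_eq: "V = P * S + s * (S * P)"
    and W_V: "W * V = 1"
begin

lemma s_r: "s * r = 1"
  using r_s by (simp only: r_central [of s, symmetric])

lemma r_s_cancel: "r * (s * x) = x"
  by (simp add: mult.assoc [symmetric] r_s)

lemma PS_SP: "P * S * (S * P) = 0"
proof -
  have "P * S * (S * P) = P * (S * S) * P"
    by (simp only: mult.assoc)
  then show ?thesis
    by (simp add: S_square)
qed

lemma SP_PS: "S * P * (P * S) = 0"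
proof -
  have "S * P * (P * S) = S * (P * P) * S"
    by (simp only: mult.assoc)
  then show ?thesis
    by (simp add: P_square)
qed

lemma W_V_expand: "W * V = (P * S) ^ 2 + (S * P) ^ 2"
  unfolding W_eq V_eq orthogonal_sum_mult [OF PS_SP SP_PS s_central]
  by (simp add: r_s power2_eq_square)

lemma V_W_expand: "V * W = (P * S) ^ 2 + (S * P) ^ 2"
  unfolding W_eq V_eq orthogonal_sum_mult [OF PS_SP SP_PS r_central]
  by (simp add: s_r power2_eq_square)

lemma V_W: "V * W = 1"
  using W_V by (simp only: V_W_expand W_V_expand)

lemma PS_SP_square_sum: "(P * S) ^ 2 + (S * P) ^ 2 = 1"
  using W_V by (simp only: W_V_expand)

lemma PS_cube: "(P * S) ^ 3 = P * S"
  using orthogonal_square_sum_cube [OF PS_SP_square_sum SP_PS] .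

lemma SP_cube: "(S * P) ^ 3 = S * P"
  using orthogonal_square_sum_cube [OF _ PS_SP] PS_SP_square_sum
  by (simp only: add.commute)

lemma W_cube: "W ^ 3 = P * S + r ^ 3 * (S * P)"
  using orthogonal_sum_power [OF PS_SP SP_PS r_central, of 2]
  by (simp add: W_eq PS_cube SP_cube)

lemma V_eq_W_combination: "V = (s ^ 2 + 1) * W - s ^ 2 * W ^ 3"
proof -
  have "s ^ 2 * (r * x) = s * (s * r) * x" "s ^ 2 * (r ^ 3 * x) = s * (s * r) * r * r * x" for x
    by (simp_all only: power2_eq_square power3_eq_cube mult.assoc)
  then have cancel: "s ^ 2 * (r * x) = s * x" "s ^ 2 * (r ^ 3 * x) = r * x" for x
    by (simp_all add: s_r)
  have "(s ^ 2 + 1) * W - s ^ 2 * W ^ 3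
      = (s ^ 2 + 1) * (P * S + r * (S * P)) - s ^ 2 * (P * S + r ^ 3 * (S * P))"
    by (simp only: W_cube) (simp only: W_eq)
  also have "\<dots> = V"
    by (simp add: algebra_simps cancel V_eq)
  finally show ?thesis ..
qed

lemma mult_W: "x * W = x * P * S + r * (x * S * P)"
  by (simp add: W_eq distrib_left central_left_commute [OF r_central] mult.assoc)

lemma mult_V: "x * V = x * P * S + s * (x * S * P)"
  by (simp add: V_eq distrib_left central_left_commute [OF s_central] mult.assoc)

lemma P_W_square: "P * W ^ 2 = r ^ 2 * P"
proof -
  have "P * W = r * (P * S * P)" "P * V = s * (P * S * P)"
    using mult_W [of P] mult_V [of P] by (simp_all add: P_square)
  then have "P * W = r ^ 2 * (P * V)"
    by (simp add: power2_eq_square mult.assoc r_s_cancel)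
  have "P * W ^ 2 = P * W * W"
    by (simp add: power2_eq_square mult.assoc)
  also have "\<dots> = r ^ 2 * (P * (V * W))"
    by (simp add: \<open>P * W = r ^ 2 * (P * V)\<close> mult.assoc)
  finally show ?thesis
    by (simp add: V_W)
qed

lemma S_W_square: "S * W ^ 2 = S"
proof -
  have "S * W = S * V"
    using mult_W [of S] mult_V [of S] by (simp add: S_square)
  then have "S * W ^ 2 = S * (V * W)"
    by (simp add: power2_eq_square mult.assoc [symmetric])
  then show ?thesis
    by (simp add: V_W)
qed

end

theorem lemma3p2:
  fixes e :: "'f::field \<Rightarrow> 'a::ring_1" and q :: 'f and n k :: nat
    and psi psis om omi :: "nat \<Rightarrow> 'a"
  assumes "(2::'f) \<noteq> 0" and "q \<noteq> 0" and "n \<ge> 1" and "k \<ge> 1"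
    and "central_hom e"
    and "clq_rels e q n k psi psis om omi"
    and "a \<in> {1..n}"
  shows "psi a * om a ^ (2 * k) = e (inverse q ^ (2 * k)) * psi a
       \<and> psis a * om a ^ (2 * k) = psis a
       \<and> omi a ^ k = e (q ^ (2 * k) + 1) * om a ^ k - e (q ^ (2 * k)) * om a ^ (3 * k)"
proof -
  note e = \<open>central_hom e\<close>
  have rels: "om a * omi a = 1" "psi a * psi a + psi a * psi a = 0"
      "psis a * psis a + psis a * psis a = 0"
      "psi a * psis a + e (q ^ k) * psis a * psi a = omi a ^ k"
      "psi a * psis a + e (inverse q ^ k) * psis a * psi a = om a ^ k"
    using assms(6,7) unfolding clq_rels_def by blast+
  interpret clifford_mode "psi a" "psis a" "e (inverse q ^ k)" "e (q ^ k)" "om a ^ k" "omi a ^ k"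
  proof
    show "psi a * psi a = 0" "psis a * psis a = 0"
      using rels(2,3) by (auto intro: central_hom_double_zero [OF e \<open>2 \<noteq> 0\<close>])
    show "e (inverse q ^ k) * z = z * e (inverse q ^ k)" "e (q ^ k) * z = z * e (q ^ k)" for z
      by (rule central_hom_commute [OF e])+
    show "e (inverse q ^ k) * e (q ^ k) = 1"
      using central_hom_inverse [OF e] \<open>q \<noteq> 0\<close> by (simp add: power_inverse)
    show "om a ^ k = psi a * psis a + e (inverse q ^ k) * (psis a * psi a)"
      "omi a ^ k = psi a * psis a + e (q ^ k) * (psis a * psi a)"
      using rels(4,5) by (simp_all only: mult.assoc)
    show "om a ^ k * omi a ^ k = 1"
      using left_right_inverse_power [OF rels(1)] .
  qed
  have "om a ^ (2 * k) = (om a ^ k) ^ 2" "om a ^ (3 * k) = (om a ^ k) ^ 3"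
    "e (x ^ (2 * k)) = e (x ^ k) ^ 2" for x
    by (simp_all add: power_mult [symmetric] mult.commute central_hom_power [OF e])
  then show ?thesis
    using P_W_square S_W_square V_eq_W_combination
    by (simp add: central_hom_add [OF e] central_hom_one [OF e])
qed

end
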